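(* Let $y,\tilde{y},l,\tilde{l},u,\tilde{u}\in\mathcal{R}(\mathbb{R}^{+},\mathbb{R})$ with $l\leq u$, $\tilde l\leq\tilde u$, $l_0\leq y_0\leq u_0$, $\tilde l_0\leq\tilde y_0\leq\tilde u_0$, and $\inf_{s\leq t}(u_s-l_s)>0$, $\inf_{s\leq t}(\tilde u_s-\tilde l_s)>0$ for all $t\geq0$. Let $(x,k)$ and $(\tilde{x},\tilde{k})$ be the solutions of $RP^u_l(y)$ and $RP^{\tilde{u}}_{\tilde{l}}(\tilde{y})$ respectively. Let $T>0$ and $\|f\|_{<T}=\sup_{0\leq s<T}|f_s|$. Then $$\|k-\tilde{k}\|_{<T}\leq 2\big(\|y-\tilde{y}\|_{<T}+\|l-\tilde{l}\|_{<T}+\|u-\tilde{u}\|_{<T}\big),$$ $$\|x-\tilde{x}\|_{<T}\leq 3\big(\|y-\tilde{y}\|_{<T}+\|l-\tilde{l}\|_{<T}+\|u-\tilde{u}\|_{<T}\big).$$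
   Context: A function $f:\mathbb{R}^+=[0,\infty)\to\mathbb{R}$ is regulated if it has a left limit $f_{t^-}$ at every $t>0$ and a right limit $f_{t^+}$ at every $t\geq0$; $\mathcal{R}(\mathbb{R}^{+},\mathbb{R})$ is the set of regulated functions. Write $\Delta^+f_t=f_{t^+}-f_t$, $a\wedge b=\min(a,b)$, $a\vee b=\max(a,b)$. For a function $\phi$ of bounded variation, $\phi^r_t=\phi^c_t+\sum_{0<s\leq t}(\phi_s-\phi_{s^-})$ is its right-continuous part ($\phi^c$ the continuous part). Two-barrier problem $RP^u_l(y)$ (with $l_0\leq y_0\leq u_0$): $(x,k)$ regulated is a solution if there are $\phi^1,\phi^2$ with (i) $x=y+k$, $k=\phi^1-\phi^2$; (ii) $l\leq x\leq u$; (iii) $\phi^1,\phi^2$ non-decreasing, $\phi^1_0=\phi^2_0=0$; (iv) $\int_{[0,\infty[}\big((x_s-l_s)\wedge(x_{s^+}-l_{s^+})\big)d\phi^{1,r}_s=\int_{[0,\infty[}\big((u_s-x_s)\wedge(u_{s^+}-x_{s^+})\big)d\phi^{2,r}_s=0$; (v) for all $t$, $\sum_{s\leq t}(x_{s^+}-l_{s^+})\Delta^+\phi^1_s=\sum_{s\leq t}(u_s-x_s)\Delta^+\phi^1_s=0$ and $\sum_{s\leq t}(u_{s^+}-x_{s^+})\Delta^+\phi^2_s=\sum_{s\leq t}(x_s-l_s)\Delta^+\phi^2_s=0$. Under the stated hypotheses the solution exists and is unique. *)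

theory Defs
  imports "HOL-Analysis.Analysis"
begin

text \<open>Functions on R+ = [0,oo) are modelled as real => real; values at negative
  arguments are irrelevant.\<close>

definition regulated :: "(real \<Rightarrow> real) \<Rightarrow> bool" where
  "regulated f \<longleftrightarrow>
     (\<forall>t>0. \<exists>L. (f \<longlongrightarrow> L) (at_left t)) \<and>
     (\<forall>t\<ge>0. \<exists>R. (f \<longlongrightarrow> R) (at_right t))"

definition lft :: "(real \<Rightarrow> real) \<Rightarrow> real \<Rightarrow> real" where
  "lft f t = Lim (at_left t) f"

definition rgt :: "(real \<Rightarrow> real) \<Rightarrow> real \<Rightarrow> real" where
  "rgt f t = Lim (at_right t) f"

definition djump :: "(real \<Rightarrow> real) \<Rightarrow> real \<Rightarrow> real" where
  "djump f t = rgt f t - f t"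

definition cont_part :: "(real \<Rightarrow> real) \<Rightarrow> real \<Rightarrow> real" where
  "cont_part \<phi> t =
     \<phi> t - (\<Sum>\<^sub>\<infinity>s\<in>{0<..t}. \<phi> s - lft \<phi> s) - (\<Sum>\<^sub>\<infinity>s\<in>{0..<t}. djump \<phi> s)"

text \<open>Right-continuous part phi^r_t = phi^c_t + sum_{0<s<=t} (phi_s - phi_{s-}),
  extended by 0 to negative times (so that it defines a measure on the line).\<close>
definition rc_part :: "(real \<Rightarrow> real) \<Rightarrow> real \<Rightarrow> real" where
  "rc_part \<phi> t =
     (if t < 0 then 0 else cont_part \<phi> t + (\<Sum>\<^sub>\<infinity>s\<in>{0<..t}. \<phi> s - lft \<phi> s))"

definition is_RP_solution ::
  "(real \<Rightarrow> real) \<Rightarrow> (real \<Rightarrow> real) \<Rightarrow> (real \<Rightarrow> real) \<Rightarrow> (real \<Rightarrow> real) \<Rightarrow> (real \<Rightarrow> real) \<Rightarrow> bool"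
where
  "is_RP_solution l u y x k \<longleftrightarrow>
     regulated x \<and> regulated k \<and>
     (\<exists>\<phi>1 \<phi>2.
        (\<forall>t\<ge>0. x t = y t + k t) \<and> (\<forall>t\<ge>0. k t = \<phi>1 t - \<phi>2 t) \<and>
        (\<forall>t\<ge>0. l t \<le> x t \<and> x t \<le> u t) \<and>
        mono_on {0..} \<phi>1 \<and> mono_on {0..} \<phi>2 \<and> \<phi>1 0 = 0 \<and> \<phi>2 0 = 0 \<and>
        (\<integral>\<^sup>+ s\<in>{0..}. ennreal (min (x s - l s) (rgt x s - rgt l s))
            \<partial>interval_measure (rc_part \<phi>1)) = 0 \<and>
        (\<integral>\<^sup>+ s\<in>{0..}. ennreal (min (u s - x s) (rgt u s - rgt x s))
            \<partial>interval_measure (rc_part \<phi>2)) = 0 \<and>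
        (\<forall>t\<ge>0.
           ((\<lambda>s. (rgt x s - rgt l s) * djump \<phi>1 s) has_sum 0) {0..t} \<and>
           ((\<lambda>s. (u s - x s) * djump \<phi>1 s) has_sum 0) {0..t} \<and>
           ((\<lambda>s. (rgt u s - rgt x s) * djump \<phi>2 s) has_sum 0) {0..t} \<and>
           ((\<lambda>s. (x s - l s) * djump \<phi>2 s) has_sum 0) {0..t}))"

definition supnorm_lt :: "real \<Rightarrow> (real \<Rightarrow> real) \<Rightarrow> real" where
  "supnorm_lt T f = (SUP s\<in>{0..<T}. \<bar>f s\<bar>)"

end

theory Submission
  imports Defs
begin

text \<open>
  Let d be the sum of the sup-distances of y, l, u from y', l', u' on [0,T[. We show the
  pointwise bound |k - k'| \<le> d on [0,T[, i.e. the constants 1 and 2 instead of 2 and 3;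
  the bound for x follows from x - x' = (y - y') + (k - k').

  Write k = \<phi>1 - \<phi>2 and k' = \<phi>1' - \<phi>2', and suppose k t - k' t > c > d. Let \<tau> be
  the last time before t at which k - k' \<le> c. On ]\<tau>,t] we have
  x - x' = (y - y') + (k - k') > \<parallel>l - l'\<parallel> + \<parallel>u - u'\<parallel>, so x (and its right limit) stays
  away from l and x' stays away from u'. The complementarity conditions then forbid \<phi>1
  and \<phi>2' to grow there, by jumps or by their right-continuous parts, except on a null
  set. As k - k' can only increase through \<phi>1 and \<phi>2', k t - k' t exceeds k a - k' a \<le> c
  by arbitrarily little for suitable a \<le> \<tau> close to \<tau>: a contradiction.

  The separation of the barriers and the admissibility of the initial values are needed
  only for existence of solutions and are not used here.
\<close>

section \<open>Regulated functions\<close>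

lemma tendsto_rgtI:
  fixes f :: "real \<Rightarrow> real"
  assumes "(f \<longlongrightarrow> R) (at_right t)"
  shows "(f \<longlongrightarrow> rgt f t) (at_right t)"
proof -
  have "rgt f t = R" unfolding rgt_def by (rule tendsto_Lim) (simp_all add: assms)
  with assms show ?thesis by simp
qed

lemma regulated_tendsto_rgt:
  assumes "regulated f" "0 \<le> t"
  shows "(f \<longlongrightarrow> rgt f t) (at_right t)"
  using assms unfolding regulated_def by (metis tendsto_rgtI)

lemma regulated_diff:
  assumes "regulated f" "regulated g"
  shows "regulated (\<lambda>s. f s - g s)"
proof -
  have "\<exists>L. ((\<lambda>s. f s - g s) \<longlongrightarrow> L) F" if "\<exists>L. (f \<longlongrightarrow> L) F" "\<exists>L. (g \<longlongrightarrow> L) F" for F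
    using that by (blast intro: tendsto_diff)
  with assms show ?thesis unfolding regulated_def by blast
qed

lemma rgt_le_rgt:
  assumes "regulated f" "regulated g" "0 \<le> s" "\<And>z. 0 \<le> z \<Longrightarrow> f z \<le> g z"
  shows "rgt f s \<le> rgt g s"
proof (rule tendsto_le[OF _ regulated_tendsto_rgt regulated_tendsto_rgt])
  show "\<forall>\<^sub>F z in at_right s. f z \<le> g z"
    using eventually_at_right_less[of s] by eventually_elim (use assms in auto)
qed (use assms in auto)

lemma abs_rgt_diff_le:
  assumes "regulated f" "regulated g" "0 \<le> s" "s < T"
    and "\<And>z. z \<in> {0..<T} \<Longrightarrow> \<bar>f z - g z\<bar> \<le> d"
  shows "\<bar>rgt f s - rgt g s\<bar> \<le> d"
proof (rule tendsto_upperbound)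
  show "((\<lambda>z. \<bar>f z - g z\<bar>) \<longlongrightarrow> \<bar>rgt f s - rgt g s\<bar>) (at_right s)"
    using assms by (intro tendsto_intros regulated_tendsto_rgt)
  show "\<forall>\<^sub>F z in at_right s. \<bar>f z - g z\<bar> \<le> d"
    using assms by (intro eventually_at_rightI[of s T]) auto
qed simp

lemma regulated_locally_bounded:
  assumes "regulated f" "0 \<le> t"
  shows "\<exists>U. open U \<and> t \<in> U \<and> bounded (f ` (U \<inter> {0..}))"
proof -
  have bounded_near: "\<forall>\<^sub>F z in F. \<bar>f z\<bar> \<le> \<bar>L\<bar> + 1" if "(f \<longlongrightarrow> L) F" for L F
    using tendstoD[OF that zero_less_one] by eventually_elim (auto simp: dist_real_def)
  obtain R where "(f \<longlongrightarrow> R) (at_right t)" using assms unfolding regulated_def by blast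
  then have right: "\<forall>\<^sub>F z in at_right t. \<bar>f z\<bar> \<le> \<bar>R\<bar> + 1" by (rule bounded_near)
  obtain L where left: "\<forall>\<^sub>F z in at_left t. 0 \<le> z \<longrightarrow> \<bar>f z\<bar> \<le> \<bar>L\<bar> + 1"
  proof (cases "t = 0")
    case True
    have "\<forall>\<^sub>F z in at_left t. z < 0" using True by (intro eventually_at_leftI[of "-1"]) auto
    then show ?thesis by (intro that[of 0]) (auto elim: eventually_mono)
  next
    case False
    then obtain L where "(f \<longlongrightarrow> L) (at_left t)" using assms unfolding regulated_def by force
    then show ?thesis using that bounded_near by (metis (mono_tags, lifting) eventually_mono)
  qed
  define B where "B = max \<bar>f t\<bar> (max (\<bar>R\<bar> + 1) (\<bar>L\<bar> + 1))"
  have "\<forall>\<^sub>F z in at_left t. 0 \<le> z \<longrightarrow> \<bar>f z\<bar> \<le> B"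
    using left by eventually_elim (auto simp: B_def le_max_iff_disj)
  moreover have "\<forall>\<^sub>F z in at_right t. 0 \<le> z \<longrightarrow> \<bar>f z\<bar> \<le> B"
    using right by eventually_elim (auto simp: B_def le_max_iff_disj)
  ultimately have "\<forall>\<^sub>F z in at t. 0 \<le> z \<longrightarrow> \<bar>f z\<bar> \<le> B"
    unfolding eventually_at_split by blast
  then obtain U where U: "open U" "t \<in> U" "\<And>z. z \<in> U \<Longrightarrow> z \<noteq> t \<Longrightarrow> 0 \<le> z \<longrightarrow> \<bar>f z\<bar> \<le> B"
    unfolding eventually_at_topological by blast
  have "f ` (U \<inter> {0..}) \<subseteq> cball 0 B"
    using U(3) by (force simp: B_def)
  then show ?thesis using U(1,2) bounded_subset[OF bounded_cball] by blast
qed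

lemma regulated_bounded_Icc:
  assumes "regulated f"
  shows "bounded (f ` {0..T})"
proof -
  let ?\<U> = "{U. open U \<and> bounded (f ` (U \<inter> {0..}))}"
  have "{0..T} \<subseteq> \<Union>?\<U>" using regulated_locally_bounded[OF assms] by force
  then obtain \<V> where \<V>: "\<V> \<subseteq> ?\<U>" "finite \<V>" "{0..T} \<subseteq> \<Union>\<V>"
    by (rule compactE[OF compact_Icc]) auto
  then have "f ` {0..T} \<subseteq> (\<Union>U\<in>\<V>. f ` (U \<inter> {0..}))" by fastforce
  moreover have "bounded (\<Union>U\<in>\<V>. f ` (U \<inter> {0..}))" using \<V> by (intro bounded_UN) auto
  ultimately show ?thesis by (rule bounded_subset[rotated])
qed

lemma abs_le_supnorm_lt:
  assumes "regulated f" "s \<in> {0..<T}"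
  shows "\<bar>f s\<bar> \<le> supnorm_lt T f"
proof -
  obtain B where "\<And>z. z \<in> {0..T} \<Longrightarrow> \<bar>f z\<bar> \<le> B"
    using regulated_bounded_Icc[OF assms(1), of T] unfolding bounded_real by blast
  then have "bdd_above ((\<lambda>s. \<bar>f s\<bar>) ` {0..<T})" by (intro bdd_aboveI2[where M = B]) auto
  then show ?thesis unfolding supnorm_lt_def using assms(2) by (rule cSUP_upper2) simp
qed

lemma supnorm_lt_le:
  assumes "0 < T" "\<And>s. s \<in> {0..<T} \<Longrightarrow> \<bar>f s\<bar> \<le> C"
  shows "supnorm_lt T f \<le> C"
  unfolding supnorm_lt_def using assms by (intro cSUP_least) auto

section \<open>Jumps and right-continuous part of a nondecreasing function\<close>

lemma mono_on_tendsto_rgt: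
  fixes \<phi> :: "real \<Rightarrow> real"
  assumes "mono_on {0..} \<phi>" "0 \<le> s"
  shows "(\<phi> \<longlongrightarrow> rgt \<phi> s) (at_right s)"
proof -
  have "(\<phi> \<longlongrightarrow> Inf (\<phi> ` ({s<..} \<inter> {0..}))) (at s within ({s<..} \<inter> {0..}))"
    by (rule Lim_right_bound[where K = "\<phi> s"]) (use assms in \<open>auto simp: mono_on_def\<close>)
  moreover have "{s<..} \<inter> {0..} = {s<..}" using assms by auto
  ultimately show ?thesis by (auto intro: tendsto_rgtI)
qed

lemma mono_on_le_rgt:
  fixes \<phi> :: "real \<Rightarrow> real"
  assumes "mono_on {0..} \<phi>" "0 \<le> s"
  shows "\<phi> s \<le> rgt \<phi> s"
proof (rule tendsto_lowerbound[OF mono_on_tendsto_rgt[OF assms]])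
  show "\<forall>\<^sub>F z in at_right s. \<phi> s \<le> \<phi> z"
    using eventually_at_right_less[of s] by eventually_elim (use assms in \<open>auto simp: mono_on_def\<close>)
qed simp

lemma mono_on_rgt_le:
  fixes \<phi> :: "real \<Rightarrow> real"
  assumes "mono_on {0..} \<phi>" "0 \<le> s" "s < r"
  shows "rgt \<phi> s \<le> \<phi> r"
proof (rule tendsto_upperbound[OF mono_on_tendsto_rgt[OF assms(1,2)]])
  show "\<forall>\<^sub>F z in at_right s. \<phi> z \<le> \<phi> r"
    using assms by (intro eventually_at_rightI[of s r]) (auto simp: mono_on_def)
qed simp

lemma djump_nonneg:
  assumes "mono_on {0..} \<phi>" "0 \<le> s"
  shows "0 \<le> djump \<phi> s"
  using mono_on_le_rgt[OF assms] unfolding djump_def by simp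

lemma sum_djump_le:
  fixes \<phi> :: "real \<Rightarrow> real"
  assumes mono: "mono_on {0..} \<phi>" and "0 \<le> a" "a \<le> b" "finite G" "G \<subseteq> {a..<b}"
  shows "sum (djump \<phi>) G \<le> \<phi> b - \<phi> a"
  using assms(4,5,3)
proof (induction G arbitrary: b rule: finite_remove_induct)
  case empty
  then show ?case using mono \<open>0 \<le> a\<close> by (auto simp: mono_on_def)
next
  case (remove G)
  define m where "m = Max G"
  have "m \<in> G" unfolding m_def using remove.hyps(1,2) by (rule Max_in)
  then have m: "m \<in> G" "a \<le> m" "m < b" using remove.prems by auto
  have "G - {m} \<subseteq> {a..<m}" using remove by (fastforce simp: m_def order.strict_iff_order)
  then have "sum (djump \<phi>) (G - {m}) \<le> \<phi> m - \<phi> a" using remove.IH m by blast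
  moreover have "djump \<phi> m \<le> \<phi> b - \<phi> m"
    using mono_on_rgt_le[OF mono _ \<open>m < b\<close>] m \<open>0 \<le> a\<close> unfolding djump_def by simp
  ultimately show ?case using m remove.hyps by (simp add: sum.remove)
qed

lemma djump_summable_on:
  fixes \<phi> :: "real \<Rightarrow> real"
  assumes mono: "mono_on {0..} \<phi>" and "0 \<le> a"
  shows "djump \<phi> summable_on {a..<b}"
proof (cases "a \<le> b")
  case True
  show ?thesis
  proof (rule nonneg_bdd_above_summable_on)
    show "bdd_above (sum (djump \<phi>) ` {F. F \<subseteq> {a..<b} \<and> finite F})"
      using sum_djump_le[OF mono \<open>0 \<le> a\<close> True] by (intro bdd_aboveI2) auto
  qed (use djump_nonneg[OF mono] \<open>0 \<le> a\<close> in auto)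
qed simp

lemma infsum_djump_le:
  fixes \<phi> :: "real \<Rightarrow> real"
  assumes mono: "mono_on {0..} \<phi>" and "0 \<le> a" "a \<le> b"
  shows "infsum (djump \<phi>) {a..<b} \<le> \<phi> b - \<phi> a"
  using djump_summable_on[OF mono \<open>0 \<le> a\<close>] sum_djump_le[OF assms]
  by (rule infsum_le_finite_sums)

lemma rc_part_eq:
  "0 \<le> t \<Longrightarrow> rc_part \<phi> t = \<phi> t - infsum (djump \<phi>) {0..<t}"
  unfolding rc_part_def cont_part_def by simp

lemma rc_part_diff:
  fixes \<phi> :: "real \<Rightarrow> real"
  assumes mono: "mono_on {0..} \<phi>" and "0 \<le> a" "a \<le> b"
  shows "rc_part \<phi> b - rc_part \<phi> a = \<phi> b - \<phi> a - infsum (djump \<phi>) {a..<b}"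
proof -
  have "{0..<b} = {0..<a} \<union> {a..<b}" using assms by auto
  then have "infsum (djump \<phi>) {0..<b} = infsum (djump \<phi>) {0..<a} + infsum (djump \<phi>) {a..<b}"
    using infsum_Un_disjoint[OF djump_summable_on[OF mono, of 0 a] djump_summable_on[OF mono \<open>0 \<le> a\<close>]]
    by simp
  then show ?thesis using rc_part_eq[of a \<phi>] rc_part_eq[of b \<phi>] assms by simp
qed

lemma rc_part_mono:
  fixes \<phi> :: "real \<Rightarrow> real"
  assumes mono: "mono_on {0..} \<phi>" and "\<phi> 0 = 0" "a \<le> b"
  shows "rc_part \<phi> a \<le> rc_part \<phi> b"
proof -
  have "rc_part \<phi> 0 = 0" using rc_part_eq[of 0 \<phi>] \<open>\<phi> 0 = 0\<close> by simp
  moreover have "rc_part \<phi> a \<le> rc_part \<phi> b" if "0 \<le> a" "a \<le> b" for a b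
    using rc_part_diff[OF mono that] infsum_djump_le[OF mono that] by simp
  ultimately show ?thesis using \<open>a \<le> b\<close> unfolding rc_part_def by (smt (verit))
qed

lemma rc_part_continuous_at_right:
  fixes \<phi> :: "real \<Rightarrow> real"
  assumes mono: "mono_on {0..} \<phi>" and "\<phi> 0 = 0"
  shows "continuous (at_right a) (rc_part \<phi>)"
proof (cases "a < 0")
  case True
  have "\<forall>\<^sub>F z in at_right a. rc_part \<phi> z = rc_part \<phi> a"
    using True by (intro eventually_at_rightI[of a 0]) (auto simp: rc_part_def)
  then show ?thesis unfolding continuous_within by (simp add: tendsto_eventually)
next
  case False
  let ?F = "rc_part \<phi>"
  have "(?F \<longlongrightarrow> ?F a) (at_right a)"
  proof (rule tendsto_sandwich)
    show "\<forall>\<^sub>F z in at_right a. ?F a \<le> ?F z"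
      using rc_part_mono[OF assms] by (intro eventually_at_rightI[of a "a + 1"]) auto
    show "\<forall>\<^sub>F z in at_right a. ?F z \<le> ?F a + (\<phi> z - rgt \<phi> a)"
    proof (intro eventually_at_rightI[of a "a + 1"])
      fix z assume z: "z \<in> {a<..<a + 1}"
      have "infsum (djump \<phi>) {a} \<le> infsum (djump \<phi>) {a..<z}"
        by (rule infsum_mono_neutral)
           (use z False djump_summable_on[OF mono, of a z] djump_nonneg[OF mono] in auto)
      then show "?F z \<le> ?F a + (\<phi> z - rgt \<phi> a)"
        using rc_part_diff[OF mono, of a z] z False unfolding djump_def by auto
    qed simp
    have "((\<lambda>z. ?F a + (\<phi> z - rgt \<phi> a)) \<longlongrightarrow> ?F a + (rgt \<phi> a - rgt \<phi> a)) (at_right a)"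
      using mono_on_tendsto_rgt[OF mono] False by (intro tendsto_intros) auto
    then show "((\<lambda>z. ?F a + (\<phi> z - rgt \<phi> a)) \<longlongrightarrow> ?F a) (at_right a)" by simp
  qed simp
  then show ?thesis unfolding continuous_within by simp
qed

lemma emeasure_rc_part_Ioc:
  fixes \<phi> :: "real \<Rightarrow> real"
  assumes mono: "mono_on {0..} \<phi>" and "\<phi> 0 = 0" "0 \<le> a" "a \<le> b"
  shows "emeasure (interval_measure (rc_part \<phi>)) {a<..b}
           = ennreal (\<phi> b - \<phi> a - infsum (djump \<phi>) {a..<b})"
  using emeasure_interval_measure_Ioc[OF \<open>a \<le> b\<close>, of "rc_part \<phi>"] rc_part_mono[OF mono \<open>\<phi> 0 = 0\<close>]
    rc_part_continuous_at_right[OF mono \<open>\<phi> 0 = 0\<close>] rc_part_diff[OF mono \<open>0 \<le> a\<close> \<open>a \<le> b\<close>]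
  by auto

section \<open>Increments just before a point\<close>

lemma eventually_emeasure_Ioo_less_at_left:
  fixes M :: "real measure"
  assumes sets: "sets M = sets borel" and fin: "emeasure M {\<tau> - 1<..<\<tau>} \<noteq> \<infinity>" and "0 < \<eta>"
  shows "\<forall>\<^sub>F a in at_left \<tau>. emeasure M {a<..<\<tau>} < ennreal \<eta>"
proof -
  define A where "A n = {\<tau> - 1 / real (Suc n)<..<\<tau>}" for n
  have "range A \<subseteq> sets M" unfolding sets A_def by auto
  moreover have "decseq A"
  proof (rule decseq_SucI)
    fix n
    have "1 / real (Suc (Suc n)) \<le> 1 / real (Suc n)" by (simp add: frac_le)
    then show "A (Suc n) \<subseteq> A n" unfolding A_def by auto
  qed
  moreover have "A n \<subseteq> {\<tau> - 1<..<\<tau>}" for n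
    unfolding A_def greaterThanLessThan_subseteq_greaterThanLessThan by (simp add: field_simps)
  then have "emeasure M (A n) \<noteq> \<infinity>" for n
    using emeasure_mono[of "A n" "{\<tau> - 1<..<\<tau>}" M] fin sets by (auto simp: top_unique)
  moreover have "(\<Inter>n. A n) = {}"
  proof safe
    fix z assume z: "z \<in> (\<Inter>n. A n)"
    then have "z < \<tau>" by (auto simp: A_def)
    then obtain n where "inverse (real (Suc n)) < \<tau> - z" using reals_Archimedean[of "\<tau> - z"] by auto
    with z show "z \<in> {}" by (auto simp: A_def field_simps dest!: spec[of _ n])
  qed
  ultimately have "(\<lambda>n. emeasure M (A n)) \<longlonglongrightarrow> 0"
    using Lim_emeasure_decseq[of A M] by simp
  then have "\<forall>\<^sub>F n in sequentially. emeasure M (A n) < ennreal \<eta>"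
    using \<open>0 < \<eta>\<close> by (intro order_tendstoD(2)) auto
  then obtain n where n: "emeasure M (A n) < ennreal \<eta>" by (auto simp: eventually_sequentially)
  show ?thesis
  proof (rule eventually_at_leftI[of "\<tau> - 1 / real (Suc n)"])
    fix a assume "a \<in> {\<tau> - 1 / real (Suc n)<..<\<tau>}"
    then have "{a<..<\<tau>} \<subseteq> A n" by (auto simp: A_def)
    then show "emeasure M {a<..<\<tau>} < ennreal \<eta>"
      using emeasure_mono[of "{a<..<\<tau>}" "A n" M] n sets by (auto simp: A_def)
  qed simp
qed

lemma eventually_infsum_less_at_left:
  fixes f :: "real \<Rightarrow> real"
  assumes summable: "f summable_on {0..<\<tau>}" and nonneg: "\<And>s. s \<in> {0..<\<tau>} \<Longrightarrow> 0 \<le> f s"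
    and "0 < \<tau>" "0 < \<eta>"
  shows "\<forall>\<^sub>F a in at_left \<tau>. infsum f {a..<\<tau>} < \<eta>"
proof -
  obtain G where G: "finite G" "G \<subseteq> {0..<\<tau>}" "dist (sum f G) (infsum f {0..<\<tau>}) \<le> \<eta> / 2"
    using infsum_finite_approximation[OF summable, of "\<eta> / 2"] \<open>0 < \<eta>\<close> by auto
  define b where "b = Max (insert 0 G)"
  have "b < \<tau>" using G \<open>0 < \<tau>\<close> by (auto simp: b_def)
  show ?thesis
  proof (rule eventually_at_leftI[OF _ \<open>b < \<tau>\<close>])
    fix a assume a: "a \<in> {b<..<\<tau>}"
    have "0 \<le> b" "\<And>g. g \<in> G \<Longrightarrow> g \<le> b" using G by (auto simp: b_def)
    then have disj: "{a..<\<tau>} \<inter> G = {}" and sub: "{a..<\<tau>} \<subseteq> {0..<\<tau>}" using a by fastforce+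
    have "infsum f {a..<\<tau>} + sum f G = infsum f ({a..<\<tau>} \<union> G)"
      using infsum_Un_disjoint[OF summable_on_subset_banach[OF summable sub] _ disj] G by simp
    also have "\<dots> \<le> infsum f {0..<\<tau>}"
      using G sub nonneg summable summable_on_subset_banach[OF summable, of "{a..<\<tau>} \<union> G"]
      by (intro infsum_mono_neutral) auto
    moreover have "infsum f {0..<\<tau>} - sum f G \<le> \<eta> / 2"
      using G(3) unfolding dist_real_def abs_le_iff by linarith
    ultimately show "infsum f {a..<\<tau>} < \<eta>" using \<open>0 < \<eta>\<close> by linarith
  qed
qed

lemma eventually_small_increment_at_left:
  fixes \<phi> :: "real \<Rightarrow> real"
  assumes mono: "mono_on {0..} \<phi>" and "\<phi> 0 = 0" "0 < \<tau>" "0 < \<eta>"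
  shows "\<forall>\<^sub>F a in at_left \<tau>. 0 \<le> a \<and> emeasure (interval_measure (rc_part \<phi>)) {a<..<\<tau>} < ennreal \<eta>
           \<and> infsum (djump \<phi>) {a..<\<tau>} < \<eta>"
proof (intro eventually_conj)
  show "\<forall>\<^sub>F a in at_left \<tau>. 0 \<le> a" using \<open>0 < \<tau>\<close> by (intro eventually_at_leftI[of 0]) auto
  let ?M = "interval_measure (rc_part \<phi>)"
  have "emeasure ?M {\<tau> - 1<..<\<tau>} \<le> emeasure ?M {\<tau> - 1<..\<tau>}" by (intro emeasure_mono) auto
  also have "\<dots> = ennreal (rc_part \<phi> \<tau> - rc_part \<phi> (\<tau> - 1))"
    using rc_part_mono[OF assms(1,2)] rc_part_continuous_at_right[OF assms(1,2)]
    by (intro emeasure_interval_measure_Ioc) auto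
  finally have "emeasure ?M {\<tau> - 1<..<\<tau>} \<noteq> \<infinity>" by (auto simp: top_unique)
  then show "\<forall>\<^sub>F a in at_left \<tau>. emeasure ?M {a<..<\<tau>} < ennreal \<eta>"
    using \<open>0 < \<eta>\<close> by (intro eventually_emeasure_Ioo_less_at_left) auto
  show "\<forall>\<^sub>F a in at_left \<tau>. infsum (djump \<phi>) {a..<\<tau>} < \<eta>"
    using djump_summable_on[OF mono] djump_nonneg[OF mono] assms
    by (intro eventually_infsum_less_at_left) auto
qed

lemma increment_less_if_flat:
  fixes \<phi> :: "real \<Rightarrow> real"
  assumes mono: "mono_on {0..} \<phi>" and "\<phi> 0 = 0" "0 \<le> a" "a \<le> \<tau>" "\<tau> \<le> t"
    and cover: "{a<..t} \<subseteq> {a<..<\<tau>} \<union> N" and null: "N \<in> null_sets (interval_measure (rc_part \<phi>))"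
    and no_jumps: "\<And>s. s \<in> {\<tau>..<t} \<Longrightarrow> djump \<phi> s = 0"
    and small_measure: "emeasure (interval_measure (rc_part \<phi>)) {a<..<\<tau>} < ennreal \<eta>"
    and small_jumps: "infsum (djump \<phi>) {a..<\<tau>} < \<eta>"
  shows "\<phi> t - \<phi> a < 2 * \<eta>"
proof -
  let ?M = "interval_measure (rc_part \<phi>)"
  have "ennreal (\<phi> t - \<phi> a - infsum (djump \<phi>) {a..<t}) = emeasure ?M {a<..t}"
    using emeasure_rc_part_Ioc[OF mono \<open>\<phi> 0 = 0\<close> \<open>0 \<le> a\<close>, of t] assms by simp
  also have "\<dots> \<le> emeasure ?M ({a<..<\<tau>} \<union> N)" by (rule emeasure_mono[OF cover]) (use null in auto)
  also have "\<dots> = emeasure ?M {a<..<\<tau>}" by (rule emeasure_Un_null_set) (use null in auto)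
  finally have "ennreal (\<phi> t - \<phi> a - infsum (djump \<phi>) {a..<t}) < ennreal \<eta>"
    using small_measure by simp
  then have "\<phi> t - \<phi> a - infsum (djump \<phi>) {a..<t} < \<eta>"
    by (cases "0 \<le> \<phi> t - \<phi> a - infsum (djump \<phi>) {a..<t}") (auto simp: ennreal_less_iff ennreal_neg)
  moreover have "infsum (djump \<phi>) {a..<t} = infsum (djump \<phi>) {a..<\<tau>}"
    by (rule infsum_cong_neutral) (use no_jumps assms in auto)
  ultimately show ?thesis using small_jumps by simp
qed

section \<open>Solutions of the two-barrier problem\<close>

lemma djump_eq_0_if_has_sum_0:
  fixes \<phi> :: "real \<Rightarrow> real"
  assumes "mono_on {0..} \<phi>" "((\<lambda>s. g s * djump \<phi> s) has_sum 0) {0..t}"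
    and "\<And>s. s \<in> {0..t} \<Longrightarrow> 0 \<le> g s" "s \<in> {0..t}" "0 < g s"
  shows "djump \<phi> s = 0"
proof -
  have "g s * djump \<phi> s = 0"
    using assms djump_nonneg[OF assms(1)] by (intro nonneg_has_sum_le_0D[OF assms(2)]) auto
  with \<open>0 < g s\<close> show ?thesis by simp
qed

lemma null_sets_if_nn_integral_eq_0:
  fixes f :: "'a \<Rightarrow> real"
  assumes "(\<integral>\<^sup>+ s\<in>A. ennreal (f s) \<partial>M) = 0" "B \<in> sets M" "B \<subseteq> A"
    and "0 < e" "\<And>s. s \<in> B \<Longrightarrow> e \<le> f s"
  shows "B \<in> null_sets M"
proof -
  have "ennreal e * emeasure M B = (\<integral>\<^sup>+ s. ennreal e * indicator B s \<partial>M)"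
    using assms by (simp add: nn_integral_cmult_indicator)
  also have "\<dots> \<le> (\<integral>\<^sup>+ s. ennreal (f s) * indicator A s \<partial>M)"
    by (intro nn_integral_mono) (use assms in \<open>auto intro: ennreal_leI split: split_indicator\<close>)
  also have "\<dots> = 0" using assms by simp
  finally show ?thesis using assms by (simp add: null_sets_def)
qed

locale RP_solution =
  fixes l u y x \<phi>1 \<phi>2 :: "real \<Rightarrow> real"
  assumes regulated: "regulated l" "regulated u" "regulated y" "regulated x"
    and x_eq: "\<And>t. 0 \<le> t \<Longrightarrow> x t = y t + (\<phi>1 t - \<phi>2 t)"
    and lower_le: "\<And>t. 0 \<le> t \<Longrightarrow> l t \<le> x t"
    and le_upper: "\<And>t. 0 \<le> t \<Longrightarrow> x t \<le> u t"
    and mono: "mono_on {0..} \<phi>1" "mono_on {0..} \<phi>2"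
    and start: "\<phi>1 0 = 0" "\<phi>2 0 = 0"
    and phi1_support: "(\<integral>\<^sup>+ s\<in>{0..}. ennreal (min (x s - l s) (rgt x s - rgt l s))
                         \<partial>interval_measure (rc_part \<phi>1)) = 0"
    and phi2_support: "(\<integral>\<^sup>+ s\<in>{0..}. ennreal (min (u s - x s) (rgt u s - rgt x s))
                         \<partial>interval_measure (rc_part \<phi>2)) = 0"
    and phi1_jumps:
      "\<And>t. 0 \<le> t \<Longrightarrow> ((\<lambda>s. (rgt x s - rgt l s) * djump \<phi>1 s) has_sum 0) {0..t}"
      "\<And>t. 0 \<le> t \<Longrightarrow> ((\<lambda>s. (u s - x s) * djump \<phi>1 s) has_sum 0) {0..t}"
    and phi2_jumps:
      "\<And>t. 0 \<le> t \<Longrightarrow> ((\<lambda>s. (rgt u s - rgt x s) * djump \<phi>2 s) has_sum 0) {0..t}"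
      "\<And>t. 0 \<le> t \<Longrightarrow> ((\<lambda>s. (x s - l s) * djump \<phi>2 s) has_sum 0) {0..t}"

lemma is_RP_solutionE:
  assumes "is_RP_solution l u y x k" "regulated l" "regulated u" "regulated y"
  obtains \<phi>1 \<phi>2 where "RP_solution l u y x \<phi>1 \<phi>2" "\<And>t. 0 \<le> t \<Longrightarrow> k t = \<phi>1 t - \<phi>2 t"
proof -
  have "\<exists>\<phi>1 \<phi>2. RP_solution l u y x \<phi>1 \<phi>2 \<and> (\<forall>t\<ge>0. k t = \<phi>1 t - \<phi>2 t)"
    using assms unfolding is_RP_solution_def RP_solution_def by fastforce
  with that show thesis by blast
qed

context RP_solution
begin

lemma rgt_x_eq:
  assumes "0 \<le> s"
  shows "rgt x s = rgt y s + (rgt \<phi>1 s - rgt \<phi>2 s)"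
proof -
  have "((\<lambda>z. y z + (\<phi>1 z - \<phi>2 z)) \<longlongrightarrow> rgt y s + (rgt \<phi>1 s - rgt \<phi>2 s)) (at_right s)"
    using assms regulated mono by (intro tendsto_intros regulated_tendsto_rgt mono_on_tendsto_rgt)
  moreover have "\<forall>\<^sub>F z in at_right s. y z + (\<phi>1 z - \<phi>2 z) = x z"
    using eventually_at_right_less[of s] by eventually_elim (use assms x_eq in auto)
  ultimately have "(x \<longlongrightarrow> rgt y s + (rgt \<phi>1 s - rgt \<phi>2 s)) (at_right s)"
    by (rule Lim_transform_eventually)
  then show ?thesis using tendsto_unique[OF _ regulated_tendsto_rgt[OF regulated(4) assms]] by simp
qed

lemma rgt_lower_le: "0 \<le> s \<Longrightarrow> rgt l s \<le> rgt x s"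
  by (rule rgt_le_rgt) (use regulated lower_le in auto)

lemma rgt_le_upper: "0 \<le> s \<Longrightarrow> rgt x s \<le> rgt u s"
  by (rule rgt_le_rgt) (use regulated le_upper in auto)

lemma djump_phi1_eq_0_if_rgt_above_lower: "0 \<le> s \<Longrightarrow> rgt l s < rgt x s \<Longrightarrow> djump \<phi>1 s = 0"
  using rgt_lower_le by (intro djump_eq_0_if_has_sum_0[OF mono(1) phi1_jumps(1)[of s]]) auto

lemma djump_phi1_eq_0_if_below_upper: "0 \<le> s \<Longrightarrow> x s < u s \<Longrightarrow> djump \<phi>1 s = 0"
  using le_upper by (intro djump_eq_0_if_has_sum_0[OF mono(1) phi1_jumps(2)[of s]]) auto

lemma djump_phi2_eq_0_if_above_lower: "0 \<le> s \<Longrightarrow> l s < x s \<Longrightarrow> djump \<phi>2 s = 0"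
  using lower_le by (intro djump_eq_0_if_has_sum_0[OF mono(2) phi2_jumps(2)[of s]]) auto

lemma djump_phi2_eq_0_if_rgt_below_upper: "0 \<le> s \<Longrightarrow> rgt x s < rgt u s \<Longrightarrow> djump \<phi>2 s = 0"
  using rgt_le_upper by (intro djump_eq_0_if_has_sum_0[OF mono(2) phi2_jumps(1)[of s]]) auto

lemma null_sets_phi1:
  assumes "N \<in> sets borel" "N \<subseteq> {0..}" "0 < e"
    and "\<And>s. s \<in> N \<Longrightarrow> e \<le> x s - l s \<and> e \<le> rgt x s - rgt l s"
  shows "N \<in> null_sets (interval_measure (rc_part \<phi>1))"
  using assms by (intro null_sets_if_nn_integral_eq_0[OF phi1_support, of _ e]) auto

lemma null_sets_phi2:
  assumes "N \<in> sets borel" "N \<subseteq> {0..}" "0 < e"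
    and "\<And>s. s \<in> N \<Longrightarrow> e \<le> u s - x s \<and> e \<le> rgt u s - rgt x s"
  shows "N \<in> null_sets (interval_measure (rc_part \<phi>2))"
  using assms by (intro null_sets_if_nn_integral_eq_0[OF phi2_support, of _ e]) auto

end

section \<open>Comparison of two solutions\<close>

lemma last_time_at_most:
  fixes f :: "real \<Rightarrow> real"
  assumes "0 \<le> t" "f 0 \<le> c"
  obtains \<tau> where "0 \<le> \<tau>" "\<tau> \<le> t" "\<And>s. \<tau> < s \<Longrightarrow> s \<le> t \<Longrightarrow> c < f s"
    and "f \<tau> \<le> c \<or> (0 < \<tau> \<and> (\<exists>\<^sub>F a in at_left \<tau>. f a \<le> c))"
proof -
  define S where "S = {s\<in>{0..t}. f s \<le> c}"
  have "0 \<in> S" "bdd_above S" using assms by (auto simp: S_def)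
  define \<tau> where "\<tau> = Sup S"
  have "0 \<le> \<tau>" unfolding \<tau>_def using \<open>0 \<in> S\<close> \<open>bdd_above S\<close> by (rule cSup_upper)
  moreover have "\<tau> \<le> t" unfolding \<tau>_def using \<open>0 \<in> S\<close> by (intro cSup_least) (auto simp: S_def)
  moreover have "c < f s" if "\<tau> < s" "s \<le> t" for s
    using cSup_upper[OF _ \<open>bdd_above S\<close>, of s] that \<open>0 \<le> \<tau>\<close> by (force simp: S_def \<tau>_def)
  moreover have "f \<tau> \<le> c \<or> (0 < \<tau> \<and> (\<exists>\<^sub>F a in at_left \<tau>. f a \<le> c))"
  proof (cases "\<tau> \<in> S")
    case False
    then have "0 < \<tau>" using \<open>0 \<le> \<tau>\<close> \<open>0 \<in> S\<close> by (cases "\<tau> = 0") auto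
    have "\<exists>\<^sub>F a in at_left \<tau>. f a \<le> c"
    proof (rule ccontr)
      assume "\<not> (\<exists>\<^sub>F a in at_left \<tau>. f a \<le> c)"
      then obtain b where b: "b < \<tau>" "\<And>a. b < a \<Longrightarrow> a < \<tau> \<Longrightarrow> c < f a"
        unfolding not_frequently eventually_at_left_field by (force simp: not_le)
      have "a \<le> b" if "a \<in> S" for a
      proof (rule ccontr)
        have "a < \<tau>" using that False cSup_upper[OF that \<open>bdd_above S\<close>] unfolding \<tau>_def
          by (metis order_less_le)
        moreover assume "\<not> a \<le> b"
        ultimately have "c < f a" using b by simp
        with that show False by (simp add: S_def)
      qed
      then have "\<tau> \<le> b" unfolding \<tau>_def using \<open>0 \<in> S\<close> by (intro cSup_least) auto
      with \<open>b < \<tau>\<close> show False by simp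
    qed
    with \<open>0 < \<tau>\<close> show ?thesis by simp
  qed (simp add: S_def)
  ultimately show thesis using that by blast
qed

locale RP_comparison =
  S: RP_solution l u y x p1 p2 + S': RP_solution l' u' y' x' q1 q2
  for l u y x p1 p2 l' u' y' x' q1 q2 +
  fixes T dy dl du :: real
  assumes y_close: "\<And>s. s \<in> {0..<T} \<Longrightarrow> \<bar>y s - y' s\<bar> \<le> dy"
    and l_close: "\<And>s. s \<in> {0..<T} \<Longrightarrow> \<bar>l s - l' s\<bar> \<le> dl"
    and u_close: "\<And>s. s \<in> {0..<T} \<Longrightarrow> \<bar>u s - u' s\<bar> \<le> du"
begin

definition kdiff :: "real \<Rightarrow> real" where
  "kdiff s = (p1 s - p2 s) - (q1 s - q2 s)"

lemma distances_nonneg: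
  assumes "0 < T"
  shows "0 \<le> dy" "0 \<le> dl" "0 \<le> du"
  using y_close[of 0] l_close[of 0] u_close[of 0] assms by auto

lemma gaps_where_kdiff_large:
  assumes "0 \<le> s" "s < T" "dy + dl + du + e < kdiff s"
  shows "e < x s - l s" "e < u' s - x' s"
proof -
  have "x s - x' s = (y s - y' s) + kdiff s" using S.x_eq S'.x_eq assms by (simp add: kdiff_def)
  moreover have "\<bar>y s - y' s\<bar> \<le> dy" "\<bar>l s - l' s\<bar> \<le> dl" "\<bar>u s - u' s\<bar> \<le> du"
    using y_close l_close u_close assms by auto
  moreover have "l' s \<le> x' s" "x s \<le> u s" using S'.lower_le S.le_upper assms by auto
  ultimately show "e < x s - l s" "e < u' s - x' s" using assms unfolding abs_le_iff by linarith+
qed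

lemma rgt_gaps_where_kdiff_large:
  assumes "0 \<le> s" "s < T" "\<forall>\<^sub>F z in at_right s. dy + dl + du + e < kdiff z"
  shows "e \<le> rgt x s - rgt l s" "e \<le> rgt u' s - rgt x' s"
proof -
  have "\<forall>\<^sub>F z in at_right s. z \<in> {s<..<T}" using assms by (intro eventually_at_rightI[of s T]) auto
  with assms(3) have gaps: "\<forall>\<^sub>F z in at_right s. e < x z - l z \<and> e < u' z - x' z"
    by eventually_elim (use assms gaps_where_kdiff_large in auto)
  have "((\<lambda>z. x z - l z) \<longlongrightarrow> rgt x s - rgt l s) (at_right s)"
    using S.regulated assms by (intro tendsto_diff regulated_tendsto_rgt) auto
  then show "e \<le> rgt x s - rgt l s"
    by (rule tendsto_lowerbound) (use gaps in \<open>auto elim: eventually_mono\<close>)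
  have "((\<lambda>z. u' z - x' z) \<longlongrightarrow> rgt u' s - rgt x' s) (at_right s)"
    using S'.regulated assms by (intro tendsto_diff regulated_tendsto_rgt) auto
  then show "e \<le> rgt u' s - rgt x' s"
    by (rule tendsto_lowerbound) (use gaps in \<open>auto elim: eventually_mono\<close>)
qed

lemma rgt_gaps_where_kdiff_exceeds:
  assumes "0 \<le> t" "t < T" "dy + dl + du < kdiff t"
  shows "0 < rgt x t - rgt l t" "0 < rgt u' t - rgt x' t"
proof -
  \<comment> \<open>Since x t > l t and x' t < u' t, neither p2 nor q1 jumps at t, so k - k' cannot decrease across t.\<close>
  have "0 < x t - l t" "0 < u' t - x' t" using gaps_where_kdiff_large[of t 0] assms by auto
  then have "djump p2 t = 0" "djump q1 t = 0"
    using S.djump_phi2_eq_0_if_above_lower S'.djump_phi1_eq_0_if_below_upper assms by auto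
  moreover have "0 \<le> djump p1 t" "0 \<le> djump q2 t"
    using djump_nonneg S.mono S'.mono assms by auto
  moreover have "\<bar>rgt y t - rgt y' t\<bar> \<le> dy" "\<bar>rgt l t - rgt l' t\<bar> \<le> dl"
    "\<bar>rgt u t - rgt u' t\<bar> \<le> du"
    using S.regulated S'.regulated assms y_close l_close u_close by (auto intro!: abs_rgt_diff_le)
  moreover have "rgt l' t \<le> rgt x' t" "rgt x t \<le> rgt u t"
    using S'.rgt_lower_le S.rgt_le_upper assms by auto
  moreover have "0 \<le> dl" "0 \<le> du" using distances_nonneg assms by auto
  ultimately show "0 < rgt x t - rgt l t" "0 < rgt u' t - rgt x' t"
    using S.rgt_x_eq[OF assms(1)] S'.rgt_x_eq[OF assms(1)] assms(3)
    unfolding kdiff_def djump_def abs_le_iff by linarith+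
qed

lemma djumps_eq_0_where_kdiff_large:
  assumes "0 \<le> s" "s < T" "0 < e" "\<forall>\<^sub>F z in at_right s. dy + dl + du + e < kdiff z"
  shows "djump p1 s = 0" "djump q2 s = 0"
  using rgt_gaps_where_kdiff_large[OF assms(1,2,4)] assms
    S.djump_phi1_eq_0_if_rgt_above_lower S'.djump_phi2_eq_0_if_rgt_below_upper by auto

lemma null_sets_where_kdiff_large:
  assumes "N \<in> sets borel" "N \<subseteq> {0..<T}" "0 < e"
    and "\<And>s. s \<in> N \<Longrightarrow> dy + dl + du + e < kdiff s \<and> (\<forall>\<^sub>F z in at_right s. dy + dl + du + e < kdiff z)"
  shows "N \<in> null_sets (interval_measure (rc_part p1))" "N \<in> null_sets (interval_measure (rc_part q2))"
proof -
  have gaps: "e < x s - l s \<and> e \<le> rgt x s - rgt l s \<and> e < u' s - x' s \<and> e \<le> rgt u' s - rgt x' s"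
    if "s \<in> N" for s
    using that assms gaps_where_kdiff_large[of s e] rgt_gaps_where_kdiff_large[of s e] by auto
  show "N \<in> null_sets (interval_measure (rc_part p1))"
    using assms gaps by (intro S.null_sets_phi1[of _ e]) (auto simp: less_imp_le)
  show "N \<in> null_sets (interval_measure (rc_part q2))"
    using assms gaps by (intro S'.null_sets_phi2[of _ e]) (auto simp: less_imp_le)
qed

lemma singleton_null_where_kdiff_exceeds:
  assumes "0 \<le> t" "t < T" "dy + dl + du < kdiff t"
  shows "{t} \<in> null_sets (interval_measure (rc_part p1))" "{t} \<in> null_sets (interval_measure (rc_part q2))"
proof -
  have "0 < x t - l t" "0 < u' t - x' t" using gaps_where_kdiff_large[of t 0] assms by auto
  moreover note rgt_gaps_where_kdiff_exceeds[OF assms]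
  ultimately show "{t} \<in> null_sets (interval_measure (rc_part p1))"
    "{t} \<in> null_sets (interval_measure (rc_part q2))"
    using assms
    by (auto intro!: S.null_sets_phi1[of _ "min (x t - l t) (rgt x t - rgt l t)"]
        S'.null_sets_phi2[of _ "min (u' t - x' t) (rgt u' t - rgt x' t)"])
qed

lemma start_point:
  assumes "0 \<le> \<tau>" "0 < \<eta>" "kdiff \<tau> \<le> c \<or> (0 < \<tau> \<and> (\<exists>\<^sub>F a in at_left \<tau>. kdiff a \<le> c))"
  obtains a where "0 \<le> a" "a \<le> \<tau>" "kdiff a \<le> c" "a < \<tau> \<Longrightarrow> c < kdiff \<tau>"
    "emeasure (interval_measure (rc_part p1)) {a<..<\<tau>} < ennreal \<eta>" "infsum (djump p1) {a..<\<tau>} < \<eta>"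
    "emeasure (interval_measure (rc_part q2)) {a<..<\<tau>} < ennreal \<eta>" "infsum (djump q2) {a..<\<tau>} < \<eta>"
proof (cases "kdiff \<tau> \<le> c")
  case True
  then show thesis using that[of \<tau>] assms by simp
next
  case False
  with assms have "0 < \<tau>" and below: "\<exists>\<^sub>F a in at_left \<tau>. kdiff a \<le> c" by auto
  have "\<forall>\<^sub>F a in at_left \<tau>. a < \<tau>" by (simp add: eventually_at_filter)
  from eventually_conj[OF this eventually_conj[OF
        eventually_small_increment_at_left[OF S.mono(1) S.start(1) \<open>0 < \<tau>\<close> \<open>0 < \<eta>\<close>]
        eventually_small_increment_at_left[OF S'.mono(2) S'.start(2) \<open>0 < \<tau>\<close> \<open>0 < \<eta>\<close>]]]
  obtain a where "kdiff a \<le> c" "a < \<tau>" "0 \<le> a"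
    "emeasure (interval_measure (rc_part p1)) {a<..<\<tau>} < ennreal \<eta>" "infsum (djump p1) {a..<\<tau>} < \<eta>"
    "emeasure (interval_measure (rc_part q2)) {a<..<\<tau>} < ennreal \<eta>" "infsum (djump q2) {a..<\<tau>} < \<eta>"
    using frequently_ex[OF frequently_eventually_frequently[OF below]] by blast
  then show thesis using that False by simp
qed

lemma no_push_after_last_time:
  assumes "0 \<le> \<tau>" "\<tau> \<le> t" "t < T" "0 < e" "dy + dl + du + e < kdiff t"
    and above: "\<And>s. \<tau> < s \<Longrightarrow> s \<le> t \<Longrightarrow> dy + dl + du + e < kdiff s"
  obtains N where "N \<in> null_sets (interval_measure (rc_part p1))"
    "N \<in> null_sets (interval_measure (rc_part q2))"
    "{\<tau><..t} \<subseteq> N" "dy + dl + du + e < kdiff \<tau> \<Longrightarrow> \<tau> \<in> N"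
    "\<And>s. s \<in> {\<tau>..<t} \<Longrightarrow> djump p1 s = 0 \<and> djump q2 s = 0"
proof -
  let ?c = "dy + dl + du + e"
  have eventually_above: "\<forall>\<^sub>F z in at_right s. ?c < kdiff z" if "\<tau> \<le> s" "s < t" for s
    using that above by (intro eventually_at_rightI[of s t]) auto
  define B where "B = {s \<in> {\<tau>..<t}. ?c < kdiff s}"
  have "B = (if ?c < kdiff \<tau> then {\<tau>..<t} else {\<tau><..<t})"
    using above by (auto simp: B_def order_le_less)
  then have "B \<in> sets borel" by simp
  moreover have "B \<subseteq> {0..<T}" using assms by (auto simp: B_def)
  moreover have "?c < kdiff s \<and> (\<forall>\<^sub>F z in at_right s. ?c < kdiff z)" if "s \<in> B" for s
    using that eventually_above by (auto simp: B_def)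
  ultimately have "B \<in> null_sets (interval_measure (rc_part p1))"
    "B \<in> null_sets (interval_measure (rc_part q2))"
    using null_sets_where_kdiff_large[OF _ _ \<open>0 < e\<close>] by blast+
  moreover have "{t} \<in> null_sets (interval_measure (rc_part p1))"
    "{t} \<in> null_sets (interval_measure (rc_part q2))"
    using singleton_null_where_kdiff_exceeds[OF _ \<open>t < T\<close>] assms by auto
  moreover have "djump p1 s = 0 \<and> djump q2 s = 0" if "s \<in> {\<tau>..<t}" for s
    using that eventually_above assms djumps_eq_0_where_kdiff_large[of s e] by auto
  moreover have "{\<tau><..t} \<subseteq> B \<union> {t}" "?c < kdiff \<tau> \<Longrightarrow> \<tau> \<in> B \<union> {t}"
    using above assms by (auto simp: B_def)
  ultimately show thesis using that[of "B \<union> {t}"] by (blast intro: null_sets.Un)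
qed

lemma kdiff_le:
  assumes "0 \<le> t" "t < T"
  shows "kdiff t \<le> dy + dl + du"
proof (rule ccontr)
  let ?dist = "dy + dl + du"
  assume "\<not> kdiff t \<le> ?dist"
  define e where "e = (kdiff t - ?dist) / 2"
  define \<eta> where "\<eta> = e / 4"
  let ?lvl = "?dist + e"
  have "0 < e" "0 < \<eta>" "kdiff t = ?lvl + 4 * \<eta>"
    using \<open>\<not> kdiff t \<le> ?dist\<close> by (auto simp: e_def \<eta>_def field_simps)
  have "kdiff 0 \<le> ?lvl"
    using distances_nonneg \<open>0 < e\<close> S.start S'.start assms by (auto simp: kdiff_def)
  then obtain \<tau> where \<tau>: "0 \<le> \<tau>" "\<tau> \<le> t" and above: "\<And>s. \<tau> < s \<Longrightarrow> s \<le> t \<Longrightarrow> ?lvl < kdiff s"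
    and last: "kdiff \<tau> \<le> ?lvl \<or> (0 < \<tau> \<and> (\<exists>\<^sub>F a in at_left \<tau>. kdiff a \<le> ?lvl))"
    using last_time_at_most[OF \<open>0 \<le> t\<close>] by blast
  obtain N where null: "N \<in> null_sets (interval_measure (rc_part p1))"
      "N \<in> null_sets (interval_measure (rc_part q2))"
    and N: "{\<tau><..t} \<subseteq> N" "?lvl < kdiff \<tau> \<Longrightarrow> \<tau> \<in> N"
    and no_jumps: "\<And>s. s \<in> {\<tau>..<t} \<Longrightarrow> djump p1 s = 0 \<and> djump q2 s = 0"
    using no_push_after_last_time[OF \<tau> assms(2) \<open>0 < e\<close> _ above] \<open>0 < \<eta>\<close> \<open>kdiff t = ?lvl + 4 * \<eta>\<close>
    by auto
  obtain a where a: "0 \<le> a" "a \<le> \<tau>" "kdiff a \<le> ?lvl" "a < \<tau> \<Longrightarrow> ?lvl < kdiff \<tau>"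
    and small: "emeasure (interval_measure (rc_part p1)) {a<..<\<tau>} < ennreal \<eta>"
      "infsum (djump p1) {a..<\<tau>} < \<eta>"
      "emeasure (interval_measure (rc_part q2)) {a<..<\<tau>} < ennreal \<eta>"
      "infsum (djump q2) {a..<\<tau>} < \<eta>"
    using start_point[OF \<tau>(1) \<open>0 < \<eta>\<close> last] by blast
  have cover: "{a<..t} \<subseteq> {a<..<\<tau>} \<union> N"
  proof
    fix s assume s: "s \<in> {a<..t}"
    consider "s < \<tau>" | "s = \<tau>" | "\<tau> < s" by linarith
    then show "s \<in> {a<..<\<tau>} \<union> N" using s a N by cases auto
  qed
  have "p1 t - p1 a < 2 * \<eta>"
    by (rule increment_less_if_flat[OF S.mono(1) S.start(1) a(1,2) \<tau>(2) cover null(1)])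
       (use no_jumps small in auto)
  moreover have "q2 t - q2 a < 2 * \<eta>"
    by (rule increment_less_if_flat[OF S'.mono(2) S'.start(2) a(1,2) \<tau>(2) cover null(2)])
       (use no_jumps small in auto)
  moreover have "p2 a \<le> p2 t" "q1 a \<le> q1 t"
    using S.mono(2) S'.mono(1) a \<tau> by (auto simp: mono_on_def)
  ultimately show False
    using a(3) \<open>kdiff t = ?lvl + 4 * \<eta>\<close> unfolding kdiff_def by linarith
qed

end

lemma RP_solutions_k_close:
  assumes sol: "is_RP_solution l u y x k" and sol': "is_RP_solution l' u' y' x' k'"
    and regulated: "regulated l" "regulated u" "regulated y" "regulated l'" "regulated u'" "regulated y'"
    and close: "\<And>s. s \<in> {0..<T} \<Longrightarrow> \<bar>y s - y' s\<bar> \<le> dy"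
      "\<And>s. s \<in> {0..<T} \<Longrightarrow> \<bar>l s - l' s\<bar> \<le> dl"
      "\<And>s. s \<in> {0..<T} \<Longrightarrow> \<bar>u s - u' s\<bar> \<le> du"
    and "0 \<le> t" "t < T"
  shows "\<bar>k t - k' t\<bar> \<le> dy + dl + du"
proof -
  obtain p1 p2 where p: "RP_solution l u y x p1 p2" "\<And>t. 0 \<le> t \<Longrightarrow> k t = p1 t - p2 t"
    using is_RP_solutionE[OF sol regulated(1-3)] by blast
  obtain q1 q2 where q: "RP_solution l' u' y' x' q1 q2" "\<And>t. 0 \<le> t \<Longrightarrow> k' t = q1 t - q2 t"
    using is_RP_solutionE[OF sol' regulated(4-6)] by blast
  interpret C: RP_comparison l u y x p1 p2 l' u' y' x' q1 q2 T dy dl du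
    using p q close by (simp add: RP_comparison_def RP_comparison_axioms_def)
  interpret C': RP_comparison l' u' y' x' q1 q2 l u y x p1 p2 T dy dl du
    using p q close by (simp add: RP_comparison_def RP_comparison_axioms_def abs_minus_commute)
  show ?thesis
    using C.kdiff_le C'.kdiff_le assms p q unfolding C.kdiff_def C'.kdiff_def by (auto simp: abs_le_iff)
qed

theorem proposition2:
  fixes y y' l l' u u' x x' k k' :: "real \<Rightarrow> real" and T :: real
  assumes "regulated y" "regulated y'" "regulated l" "regulated l'"
    "regulated u" "regulated u'"
    and "\<forall>t\<ge>0. l t \<le> u t" and "\<forall>t\<ge>0. l' t \<le> u' t"
    and "l 0 \<le> y 0" "y 0 \<le> u 0" and "l' 0 \<le> y' 0" "y' 0 \<le> u' 0"
    and "\<forall>t\<ge>0. (INF s\<in>{0..t}. u s - l s) > 0"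
    and "\<forall>t\<ge>0. (INF s\<in>{0..t}. u' s - l' s) > 0"
    and "is_RP_solution l u y x k"
    and "is_RP_solution l' u' y' x' k'"
    and "T > 0"
  shows "supnorm_lt T (\<lambda>s. k s - k' s) \<le>
           2 * (supnorm_lt T (\<lambda>s. y s - y' s) + supnorm_lt T (\<lambda>s. l s - l' s)
                + supnorm_lt T (\<lambda>s. u s - u' s)) \<and>
         supnorm_lt T (\<lambda>s. x s - x' s) \<le>
           3 * (supnorm_lt T (\<lambda>s. y s - y' s) + supnorm_lt T (\<lambda>s. l s - l' s)
                + supnorm_lt T (\<lambda>s. u s - u' s))"
proof -
  let ?dy = "supnorm_lt T (\<lambda>s. y s - y' s)"
  let ?dl = "supnorm_lt T (\<lambda>s. l s - l' s)"
  let ?du = "supnorm_lt T (\<lambda>s. u s - u' s)"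
  have close: "\<bar>y s - y' s\<bar> \<le> ?dy" "\<bar>l s - l' s\<bar> \<le> ?dl" "\<bar>u s - u' s\<bar> \<le> ?du"
    if "s \<in> {0..<T}" for s
    using that assms(1-6) by (auto intro!: abs_le_supnorm_lt regulated_diff)
  have k_close: "\<bar>k s - k' s\<bar> \<le> ?dy + ?dl + ?du" if "s \<in> {0..<T}" for s
    using RP_solutions_k_close[OF assms(15,16,3,5,1,4,6,2) close] that by auto
  have "x s - x' s = (y s - y' s) + (k s - k' s)" if "0 \<le> s" for s
    using assms(15,16) that unfolding is_RP_solution_def by auto
  then have x_close: "\<bar>x s - x' s\<bar> \<le> ?dy + (?dy + ?dl + ?du)" if "s \<in> {0..<T}" for s
    using close(1)[OF that] k_close[OF that] that by auto
  have nonneg: "0 \<le> ?dy" "0 \<le> ?dl" "0 \<le> ?du"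
    using close[of 0] \<open>T > 0\<close> by (auto intro: order_trans[OF abs_ge_zero])
  have "supnorm_lt T (\<lambda>s. k s - k' s) \<le> ?dy + ?dl + ?du"
    by (intro supnorm_lt_le[OF \<open>T > 0\<close>] k_close)
  moreover have "supnorm_lt T (\<lambda>s. x s - x' s) \<le> ?dy + (?dy + ?dl + ?du)"
    by (intro supnorm_lt_le[OF \<open>T > 0\<close>] x_close)
  ultimately show ?thesis using nonneg by auto
qed

end
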